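(* In the periodic lock scheduling problem, there exists a schedule $\sigma$ such that $C_{\mathrm{avg},\sigma}$ is well-defined (the limit exists) and finite.
   Context: Periodic lock scheduling problem. Time is discrete, periods $t=1,2,\dots$. There are $k$ vessel streams; stream $i$ has a direction $\delta_i\in\{D,U\}$, an integer periodicity $\lambda_i\ge1$ and an integer offset $1\le\mu_i\le\lambda_i$; $a_i(t)=1$ if $t\equiv\mu_i\pmod{\lambda_i}$ and $0$ otherwise, $a_\delta(t)=\sum_{i:\delta_i=\delta}a_i(t)$. A schedule is a sequence $\sigma=(\sigma(t))_{t\ge1}$ with $\sigma(t)\in\{D,U,W\}$ ($D$: process downstream waiting vessels and switch alignment to upstream; $U$ symmetrically; $W$: wait); it is feasible if the non-$W$ actions alternate between $D$ and $U$. Queue lengths: $n_D(0)=n_U(0)=0$ and for $t\ge1$, $n_\delta(t)=0$ if $\sigma(t)=\delta$ and $n_\delta(t)=n_\delta(t-1)+a_\delta(t)$ otherwise. $C_\sigma(t)=n_D(t)+n_U(t)$ and $C_{\mathrm{avg},\sigma}=\lim_{T\to\infty}\frac1T\sum_{t=1}^TC_\sigma(t)$. *)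

theory Defs
  imports "HOL-Analysis.Analysis"
begin

datatype direction = Dn | Up
datatype action = ActD | ActU | ActW

definition act_of :: "direction \<Rightarrow> action" where
  "act_of d = (case d of Dn \<Rightarrow> ActD | Up \<Rightarrow> ActU)"

text \<open>Streams are indexed by i < k; stream i has direction dir i,
 periodicity lam i \<ge> 1, offset 1 \<le> mu i \<le> lam i.\<close>
definition valid_instance :: "nat \<Rightarrow> (nat \<Rightarrow> direction) \<Rightarrow> (nat \<Rightarrow> nat) \<Rightarrow> (nat \<Rightarrow> nat) \<Rightarrow> bool" where
  "valid_instance k dir lam mu \<longleftrightarrow> (\<forall>i<k. 1 \<le> lam i \<and> 1 \<le> mu i \<and> mu i \<le> lam i)"

definition arrival :: "(nat \<Rightarrow> nat) \<Rightarrow> (nat \<Rightarrow> nat) \<Rightarrow> nat \<Rightarrow> nat \<Rightarrow> nat" where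
  "arrival lam mu i t = (if t mod lam i = mu i mod lam i then 1 else 0)"

definition arrivals :: "nat \<Rightarrow> (nat \<Rightarrow> direction) \<Rightarrow> (nat \<Rightarrow> nat) \<Rightarrow> (nat \<Rightarrow> nat) \<Rightarrow> direction \<Rightarrow> nat \<Rightarrow> nat" where
  "arrivals k dir lam mu d t = (\<Sum>i\<in>{i. i < k \<and> dir i = d}. arrival lam mu i t)"

text \<open>A schedule is a function from periods t = 1,2,... to actions (value at 0 irrelevant).\<close>
definition feasible :: "(nat \<Rightarrow> action) \<Rightarrow> bool" where
  "feasible \<sigma> \<longleftrightarrow> (\<forall>s t. 1 \<le> s \<and> s < t \<and> \<sigma> s \<noteq> ActW \<and> \<sigma> t \<noteq> ActW
       \<and> (\<forall>r. s < r \<and> r < t \<longrightarrow> \<sigma> r = ActW) \<longrightarrow> \<sigma> s \<noteq> \<sigma> t)"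

fun queue :: "nat \<Rightarrow> (nat \<Rightarrow> direction) \<Rightarrow> (nat \<Rightarrow> nat) \<Rightarrow> (nat \<Rightarrow> nat) \<Rightarrow> (nat \<Rightarrow> action) \<Rightarrow> direction \<Rightarrow> nat \<Rightarrow> nat" where
  "queue k dir lam mu \<sigma> d 0 = 0"
| "queue k dir lam mu \<sigma> d (Suc t) =
     (if \<sigma> (Suc t) = act_of d then 0
      else queue k dir lam mu \<sigma> d t + arrivals k dir lam mu d (Suc t))"

definition cost :: "nat \<Rightarrow> (nat \<Rightarrow> direction) \<Rightarrow> (nat \<Rightarrow> nat) \<Rightarrow> (nat \<Rightarrow> nat) \<Rightarrow> (nat \<Rightarrow> action) \<Rightarrow> nat \<Rightarrow> nat" where
  "cost k dir lam mu \<sigma> t = queue k dir lam mu \<sigma> Dn t + queue k dir lam mu \<sigma> Up t"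

definition avg_cost_seq :: "nat \<Rightarrow> (nat \<Rightarrow> direction) \<Rightarrow> (nat \<Rightarrow> nat) \<Rightarrow> (nat \<Rightarrow> nat) \<Rightarrow> (nat \<Rightarrow> action) \<Rightarrow> nat \<Rightarrow> real" where
  "avg_cost_seq k dir lam mu \<sigma> T = (\<Sum>t=1..T. real (cost k dir lam mu \<sigma> t)) / real T"

end

theory Submission
  imports Defs
begin

text \<open>Serve the two directions alternately, D in odd and U in even periods. Every queue is then
  emptied one period after it was last served, so the cost at period t is just the number of
  arrivals in the direction not served at t. This is periodic with period twice the product of
  all periodicities (the factor 2 preserves which direction is served), and the Cesaro means of
  a periodic sequence converge to its average over one period.\<close>

lemma periodic_nat_mod:
  fixes g :: "nat \<Rightarrow> 'a"
  assumes periodic: "\<And>t. g (t + p) = g t"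
  shows "g t = g (t mod p)"
proof -
  have "g (r + q * p) = g r" for r q
  proof (induction q)
    case (Suc q)
    then show ?case
      using periodic [of "r + q * p"] by (simp add: ac_simps)
  qed simp
  from this [of "t mod p" "t div p"] show ?thesis
    by simp
qed

lemma periodic_nat_Bseq:
  fixes g :: "nat \<Rightarrow> 'a::real_normed_vector"
  assumes "p > 0" and "\<And>t. g (t + p) = g t"
  shows "Bseq g"
proof -
  have "range g \<subseteq> g ` {..<p}"
    using assms by (auto intro!: image_eqI [OF periodic_nat_mod])
  then have "bounded (range g)"
    by (rule bounded_subset [OF finite_imp_bounded [OF finite_imageI [OF finite_lessThan]]])
  then show ?thesis
    by (simp add: Bseq_eq_bounded)
qed

lemma Bseq_divide_of_nat_LIMSEQ_zero:
  fixes h :: "nat \<Rightarrow> 'a::real_normed_field"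
  assumes "Bseq h"
  shows "(\<lambda>n. h n / of_nat n) \<longlonglongrightarrow> 0"
proof -
  obtain K where K: "\<And>n. norm (h n) \<le> K"
    using assms by (auto simp: Bseq_def)
  show ?thesis
  proof (rule Lim_null_comparison)
    show "\<forall>\<^sub>F n in sequentially. norm (h n / of_nat n) \<le> K / real n"
      using K by (auto intro!: always_eventually divide_right_mono simp: norm_divide)
    show "(\<lambda>n. K / real n) \<longlonglongrightarrow> 0"
      by (rule lim_const_over_n)
  qed
qed

lemma sum_atLeastAtMost_periodic_shift:
  fixes f :: "nat \<Rightarrow> 'a::comm_monoid_add"
  assumes periodic: "\<And>t. f (t + p) = f t"
  shows "(\<Sum>t=1..T + p. f t) = (\<Sum>t=1..T. f t) + (\<Sum>t=1..p. f t)"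
proof (induction T)
  case (Suc T)
  then show ?case
    using periodic [of "Suc T"] by (simp add: ac_simps)
qed simp

lemma Cesaro_mean_periodic:
  fixes f :: "nat \<Rightarrow> real"
  assumes "p > 0" and periodic: "\<And>t. f (t + p) = f t"
  shows "(\<lambda>T. (\<Sum>t=1..T. f t) / real T) \<longlonglongrightarrow> (\<Sum>t=1..p. f t) / real p"
proof -
  define mean where "mean = (\<Sum>t=1..p. f t) / real p"
  define deviation where "deviation T = (\<Sum>t=1..T. f t) - real T * mean" for T
  have "deviation (T + p) = deviation T" for T
    using \<open>p > 0\<close> sum_atLeastAtMost_periodic_shift [where f = f, OF periodic]
    by (simp add: deviation_def mean_def field_simps)
  then have "(\<lambda>T. deviation T / real T) \<longlonglongrightarrow> 0"
    by (intro Bseq_divide_of_nat_LIMSEQ_zero periodic_nat_Bseq [OF \<open>p > 0\<close>])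
  then have "(\<lambda>T. mean + deviation T / real T) \<longlonglongrightarrow> mean"
    using tendsto_add [OF tendsto_const] by fastforce
  moreover have "\<forall>\<^sub>F T in sequentially. mean + deviation T / real T = (\<Sum>t=1..T. f t) / real T"
    using eventually_gt_at_top [of 0] by eventually_elim (simp add: deviation_def field_simps)
  ultimately show ?thesis
    unfolding mean_def by (rule Lim_transform_eventually)
qed

definition alternating_schedule :: "nat \<Rightarrow> action" where
  "alternating_schedule t = (if odd t then ActD else ActU)"

lemma feasible_alternating_schedule: "feasible alternating_schedule"
  unfolding feasible_def
proof (intro allI impI)
  fix s t
  assume "1 \<le> s \<and> s < t \<and> alternating_schedule s \<noteq> ActW \<and> alternating_schedule t \<noteq> ActW
    \<and> (\<forall>r. s < r \<and> r < t \<longrightarrow> alternating_schedule r = ActW)"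
  moreover have "alternating_schedule r \<noteq> ActW" for r
    by (simp add: alternating_schedule_def)
  ultimately have "t = Suc s"
    by (metis Suc_lessI lessI)
  then show "alternating_schedule s \<noteq> alternating_schedule t"
    by (simp add: alternating_schedule_def)
qed

lemma queue_alternating_schedule:
  "queue k dir lam mu alternating_schedule d t =
     (if t = 0 \<or> alternating_schedule t = act_of d then 0 else arrivals k dir lam mu d t)"
  by (induction t) (auto simp: alternating_schedule_def act_of_def split: direction.split)

lemma cost_alternating_schedule:
  assumes "t \<ge> 1"
  shows "cost k dir lam mu alternating_schedule t = arrivals k dir lam mu (if odd t then Up else Dn) t"
  using assms by (simp add: cost_def queue_alternating_schedule alternating_schedule_def act_of_def)

lemma arrivals_periodic:
  assumes "\<And>i. i < k \<Longrightarrow> lam i dvd p"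
  shows "arrivals k dir lam mu d (t + p) = arrivals k dir lam mu d t"
  unfolding arrivals_def
proof (rule sum.cong)
  fix i
  assume "i \<in> {i. i < k \<and> dir i = d}"
  then have "(t + p) mod lam i = t mod lam i"
    using assms by (auto elim!: dvdE simp: mod_add_right_eq [symmetric])
  then show "arrival lam mu i (t + p) = arrival lam mu i t"
    by (simp add: arrival_def)
qed simp

theorem lemma4:
  fixes k :: nat and dir :: "nat \<Rightarrow> direction" and lam mu :: "nat \<Rightarrow> nat"
  assumes "valid_instance k dir lam mu"
  shows "\<exists>\<sigma> L. feasible \<sigma> \<and> (avg_cost_seq k dir lam mu \<sigma> \<longlonglongrightarrow> L)"
proof -
  define p where "p = 2 * (\<Prod>i<k. lam i)"
  define f where "f t = real (arrivals k dir lam mu (if odd t then Up else Dn) t)" for t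
  have "p > 0"
    using assms by (auto simp: p_def valid_instance_def intro!: prod_pos)
  have "\<And>i. i < k \<Longrightarrow> lam i dvd p"
    unfolding p_def by (intro dvd_mult dvd_prodI) auto
  then have "f (t + p) = f t" for t
    by (simp add: f_def p_def arrivals_periodic)
  then have "(\<lambda>T. (\<Sum>t=1..T. f t) / real T) \<longlonglongrightarrow> (\<Sum>t=1..p. f t) / real p"
    by (rule Cesaro_mean_periodic [OF \<open>p > 0\<close>])
  moreover have "avg_cost_seq k dir lam mu alternating_schedule = (\<lambda>T. (\<Sum>t=1..T. f t) / real T)"
    by (simp add: fun_eq_iff avg_cost_seq_def cost_alternating_schedule f_def)
  ultimately have "avg_cost_seq k dir lam mu alternating_schedule \<longlonglongrightarrow> (\<Sum>t=1..p. f t) / real p"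
    by simp
  then show ?thesis
    using feasible_alternating_schedule by blast
qed

end
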